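(* Let $\mathcal G$ be an input-output network with input nodes $\iota_1,\dots,\iota_n$ and output node $o$. Partition the remaining nodes into: $\sigma$-nodes (upstream from $o$ and downstream from at least one input node), $d$-nodes (not downstream from any input node), and $u$-nodes (downstream from at least one input node but not upstream from $o$). Consider an admissible system of the form $$\dot x_{\iota_m}=f_{\iota_m}(x_{\iota},x_\sigma,x_d,x_o,\mathcal I)\ (m=1,\dots,n),\quad \dot x_\sigma=f_\sigma(x_\iota,x_\sigma,x_d,x_o),\quad \dot x_u=f_u(x_\iota,x_\sigma,x_u,x_d,x_o),$$ $$\dot x_d=f_d(x_d),\quad \dot x_o=f_o(x_\iota,x_\sigma,x_d,x_o),$$ where $x_\iota=(x_{\iota_1},\dots,x_{\iota_n})$. Suppose $X_0=(x_\iota^*,x_\sigma^*,x_u^*,x_d^*,x_o^* )$ is a linearly stable equilibrium of this system (for some fixed value of $\mathcal I$). Then the core admissible system obtained by freezing $x_d$ at $x_d^*$, $$\dot x_{\iota_m}=f_{\iota_m}(x_\iota,x_\sigma,x_d^*,x_o,\mathcal I),\quad \dot x_\sigma=f_\sigma(x_\iota,x_\sigma,x_d^*,x_o),\quad \dot x_o=f_o(x_\iota,x_\sigma,x_d^*,x_o),$$ has a linearly stable equilibrium at $Y_0=(x_\iota^*,x_\sigma^*,x_o^* )$ (for the same value of $\mathcal I$).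
   Context: A node $b$ is downstream from a node $a$ (and $a$ upstream from $b$) if there is a directed path from $a$ to $b$; every node is upstream and downstream from itself. An admissible system assigns a real variable to each node, is smooth, only the input-node equations depend on the scalar input parameter $\mathcal I$, and $\partial f_j/\partial x_\ell\equiv0$ unless there is an arrow $\ell\to j$. An equilibrium is linearly stable if all eigenvalues of the Jacobian there have negative real part. *)

theory Defs
  imports "HOL-Analysis.Analysis"
begin

text \<open>Nodes form a finite type 'n; a state is a vector in real^'n; the vector field
  of an admissible system is f :: 'n => real^'n => real => real, where the last argument
  is the input parameter I.\<close>

definition pderiv_x :: "(real^'n \<Rightarrow> real \<Rightarrow> real) \<Rightarrow> real^'n \<Rightarrow> real \<Rightarrow> 'n \<Rightarrow> real" where
  "pderiv_x g x I k = deriv (\<lambda>t. g (x + t *\<^sub>R axis k 1) I) 0"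

text \<open>Smoothness (C-infinity): g belongs to a family of continuous functions closed under
  taking partial derivatives in every direction (all state coordinates and I).\<close>
definition smooth_fun :: "(real^'n \<Rightarrow> real \<Rightarrow> real) \<Rightarrow> bool" where
  "smooth_fun g \<longleftrightarrow> (\<exists>S. g \<in> S \<and>
     (\<forall>h\<in>S. continuous_on UNIV (\<lambda>(x, I). h x I)
        \<and> (\<forall>k. \<exists>h'\<in>S. \<forall>x I. ((\<lambda>t. h (x + t *\<^sub>R axis k 1) I) has_real_derivative h' x I) (at 0))
        \<and> (\<exists>h'\<in>S. \<forall>x I. ((\<lambda>t. h x (I + t)) has_real_derivative h' x I) (at 0))))"

definition downstream :: "('n \<times> 'n) set \<Rightarrow> 'n \<Rightarrow> 'n \<Rightarrow> bool" where
  "downstream E a b \<longleftrightarrow> (a, b) \<in> E\<^sup>*"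

definition sigma_nodes :: "('n \<times> 'n) set \<Rightarrow> 'n set \<Rightarrow> 'n \<Rightarrow> 'n set" where
  "sigma_nodes E Ins out = {k. k \<notin> Ins \<and> k \<noteq> out \<and> downstream E k out
      \<and> (\<exists>i\<in>Ins. downstream E i k)}"

definition d_nodes :: "('n \<times> 'n) set \<Rightarrow> 'n set \<Rightarrow> 'n \<Rightarrow> 'n set" where
  "d_nodes E Ins out = {k. k \<notin> Ins \<and> k \<noteq> out \<and> \<not> (\<exists>i\<in>Ins. downstream E i k)}"

definition u_nodes :: "('n \<times> 'n) set \<Rightarrow> 'n set \<Rightarrow> 'n \<Rightarrow> 'n set" where
  "u_nodes E Ins out = {k. k \<notin> Ins \<and> k \<noteq> out \<and> \<not> downstream E k out
      \<and> (\<exists>i\<in>Ins. downstream E i k)}"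

definition admissible :: "('n \<times> 'n) set \<Rightarrow> 'n set \<Rightarrow> ('n \<Rightarrow> real^'n \<Rightarrow> real \<Rightarrow> real) \<Rightarrow> bool" where
  "admissible E Ins f \<longleftrightarrow>
     (\<forall>j. smooth_fun (f j))
   \<and> (\<forall>j. j \<notin> Ins \<longrightarrow> (\<forall>x I I'. f j x I = f j x I'))
   \<and> (\<forall>j l. l \<noteq> j \<and> (l, j) \<notin> E \<longrightarrow> (\<forall>x I. pderiv_x (f j) x I l = 0))"

definition eigenvalue_on :: "'n set \<Rightarrow> ('n \<Rightarrow> 'n \<Rightarrow> real) \<Rightarrow> complex \<Rightarrow> bool" where
  "eigenvalue_on S M mu \<longleftrightarrow> (\<exists>v :: 'n \<Rightarrow> complex. (\<exists>k\<in>S. v k \<noteq> 0)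
      \<and> (\<forall>j\<in>S. (\<Sum>k\<in>S. complex_of_real (M j k) * v k) = mu * v j))"

definition lin_stable_equilibrium ::
  "'n set \<Rightarrow> ('n \<Rightarrow> real^'n \<Rightarrow> real \<Rightarrow> real) \<Rightarrow> real^'n \<Rightarrow> real \<Rightarrow> bool" where
  "lin_stable_equilibrium S f X0 I0 \<longleftrightarrow>
     (\<forall>j\<in>S. f j X0 I0 = 0)
   \<and> (\<forall>mu. eigenvalue_on S (\<lambda>j k. pderiv_x (f j) X0 I0 k) mu \<longrightarrow> Re mu < 0)"

definition freeze :: "'n set \<Rightarrow> real^'n \<Rightarrow> real^'n \<Rightarrow> real^'n" where
  "freeze S X0 y = (\<chi> k. if k \<in> S then y $ k else X0 $ k)"

end

theory Submission
  imports Defs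
begin

text \<open>Let C be the core nodes and D the d-nodes; the remaining nodes are the u-nodes.
  By the form of the equations the Jacobian J is block upper triangular with respect to
  the splitting (-D, D), and its (-D)-block is block lower triangular with respect to
  (C, u-nodes). So an eigenvector of the C-block extends to an eigenvector of the (-D)-block,
  by zero if \<mu> is an eigenvalue of the u-block and otherwise by solving the invertible system
  (J_uu - \<mu>) w = -J_uC v, and then by zero to an eigenvector of J. Hence the
  spectrum of the core Jacobian lies in that of J.\<close>

lemma eigenvalue_on_extend_by_zero:
  fixes M :: "'n \<Rightarrow> 'n \<Rightarrow> real"
  assumes "finite B" "A \<subseteq> B"
    and no_inflow: "\<And>j k. j \<in> B - A \<Longrightarrow> k \<in> A \<Longrightarrow> M j k = 0"
    and "eigenvalue_on A M mu"
  shows "eigenvalue_on B M mu"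
proof -
  obtain v where v_nonzero: "\<exists>k\<in>A. v k \<noteq> 0"
    and v_eigen: "\<forall>j\<in>A. (\<Sum>k\<in>A. complex_of_real (M j k) * v k) = mu * v j"
    using assms(4) unfolding eigenvalue_on_def by blast
  define z where "z k = (if k \<in> A then v k else 0)" for k
  have sum_B: "(\<Sum>k\<in>B. complex_of_real (M j k) * z k) = (\<Sum>k\<in>A. complex_of_real (M j k) * v k)"
    for j
    using assms(1,2) by (intro sum.mono_neutral_cong_right) (auto simp: z_def)
  have "\<forall>j\<in>B. (\<Sum>k\<in>B. complex_of_real (M j k) * z k) = mu * z j"
    unfolding sum_B using v_eigen no_inflow by (auto simp: z_def)
  moreover have "\<exists>k\<in>B. z k \<noteq> 0"
    using v_nonzero assms(2) by (auto simp: z_def)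
  ultimately show ?thesis
    unfolding eigenvalue_on_def by blast
qed

lemma shifted_block_solvable_if_not_eigenvalue:
  fixes M :: "'n::finite \<Rightarrow> 'n \<Rightarrow> real"
  assumes "\<not> eigenvalue_on U M mu"
  shows "\<exists>w. \<forall>j\<in>U. (\<Sum>k\<in>U. complex_of_real (M j k) * w k) - mu * w j = b j"
proof -
  define L where "L w = (\<chi> j. if j \<in> U
      then (\<Sum>k\<in>U. complex_of_real (M j k) * w $ k) - mu * w $ j else w $ j)" for w
  have "linear L"
    by (rule linearI) (auto simp: L_def vec_eq_iff sum.distrib algebra_simps scaleR_sum_right)
  moreover have "w = 0" if "L w = 0" for w
  proof -
    have "\<forall>j\<in>U. (\<Sum>k\<in>U. complex_of_real (M j k) * w $ k) = mu * w $ j"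
      and outside: "\<forall>j. j \<notin> U \<longrightarrow> w $ j = 0"
      using that by (auto simp: L_def vec_eq_iff split: if_splits)
    then have "\<forall>k\<in>U. w $ k = 0"
      using assms unfolding eigenvalue_on_def by blast
    with outside show "w = 0"
      by (auto simp: vec_eq_iff)
  qed
  ultimately have "surj L"
    using linear_inj_imp_surj linear_injective_0 by blast
  then obtain w where "L w = (\<chi> j. b j)"
    by (metis surjD)
  then have L_w: "L w $ j = b j" for j
    by simp
  have "(\<Sum>k\<in>U. complex_of_real (M j k) * w $ k) - mu * w $ j = b j" if "j \<in> U" for j
    using L_w[of j] that by (simp add: L_def)
  then show ?thesis by blast
qed

lemma eigenvalue_on_extend_by_solving:
  fixes M :: "'n::finite \<Rightarrow> 'n \<Rightarrow> real"
  assumes "C \<subseteq> A"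
    and no_inflow: "\<And>j k. j \<in> C \<Longrightarrow> k \<in> A - C \<Longrightarrow> M j k = 0"
    and eigen_C: "eigenvalue_on C M mu"
  shows "eigenvalue_on A M mu"
proof (cases "eigenvalue_on (A - C) M mu")
  case True
  show ?thesis
    by (rule eigenvalue_on_extend_by_zero[OF finite Diff_subset _ True]) (simp add: no_inflow)
next
  case False
  obtain v where v_nonzero: "\<exists>k\<in>C. v k \<noteq> 0"
    and v_eigen: "\<forall>j\<in>C. (\<Sum>k\<in>C. complex_of_real (M j k) * v k) = mu * v j"
    using eigen_C unfolding eigenvalue_on_def by blast
  obtain w where w_solves: "\<forall>j\<in>A - C. (\<Sum>k\<in>A - C. complex_of_real (M j k) * w k) - mu * w j
      = - (\<Sum>k\<in>C. complex_of_real (M j k) * v k)"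
    using shifted_block_solvable_if_not_eigenvalue[OF False,
        where b = "\<lambda>j. - (\<Sum>k\<in>C. complex_of_real (M j k) * v k)"] by blast
  define z where "z k = (if k \<in> C then v k else w k)" for k
  have sum_split: "(\<Sum>k\<in>A. complex_of_real (M j k) * z k)
      = (\<Sum>k\<in>C. complex_of_real (M j k) * v k) + (\<Sum>k\<in>A - C. complex_of_real (M j k) * w k)"
    for j
    using assms(1) by (simp add: sum.subset_diff[of C A] z_def)
  have "(\<Sum>k\<in>A. complex_of_real (M j k) * z k) = mu * z j" if "j \<in> A" for j
  proof (cases "j \<in> C")
    case True
    then show ?thesis
      unfolding sum_split using v_eigen no_inflow by (simp add: z_def)
  next
    case False
    then show ?thesis
      unfolding sum_split using w_solves that by (simp add: z_def algebra_simps)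
  qed
  moreover have "\<exists>k\<in>A. z k \<noteq> 0"
    using v_nonzero assms(1) by (auto simp: z_def)
  ultimately show ?thesis
    unfolding eigenvalue_on_def by blast
qed

lemma eigenvalue_on_UNIV_if_block_triangular:
  fixes M :: "'n::finite \<Rightarrow> 'n \<Rightarrow> real"
  assumes "C \<inter> D = {}"
    and C_rows: "\<And>j k. j \<in> C \<Longrightarrow> k \<notin> C \<union> D \<Longrightarrow> M j k = 0"
    and D_rows: "\<And>j k. j \<in> D \<Longrightarrow> k \<notin> D \<Longrightarrow> M j k = 0"
    and "eigenvalue_on C M mu"
  shows "eigenvalue_on UNIV M mu"
proof -
  have "eigenvalue_on (- D) M mu"
    by (rule eigenvalue_on_extend_by_solving[OF _ _ assms(4)]) (use assms(1) C_rows in auto)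
  then show ?thesis
    by (intro eigenvalue_on_extend_by_zero[OF finite subset_UNIV]) (simp_all add: D_rows)
qed

lemma pderiv_x_eq_0_if_independent:
  assumes "\<And>x x'. \<forall>k\<in>K. x $ k = x' $ k \<Longrightarrow> g x I = g x' I" and "l \<notin> K"
  shows "pderiv_x g x I l = 0"
proof -
  have "(\<lambda>t. g (x + t *\<^sub>R axis l 1) I) = (\<lambda>t. g x I)"
    using assms by (intro ext assms(1)) (auto simp: axis_def)
  then show ?thesis
    unfolding pderiv_x_def by simp
qed

lemma freeze_self: "freeze S x x = x"
  by (simp add: freeze_def vec_eq_iff)

lemma pderiv_x_freeze:
  assumes "l \<in> S"
  shows "pderiv_x (\<lambda>y I. g (freeze S x y) I) x I l = pderiv_x g x I l"
proof -
  have "freeze S x (x + t *\<^sub>R axis l 1) = x + t *\<^sub>R axis l 1" for t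
    using assms by (auto simp: freeze_def vec_eq_iff axis_def)
  then show ?thesis
    unfolding pderiv_x_def by simp
qed

lemma eigenvalue_on_Jacobian_freeze:
  "eigenvalue_on S (\<lambda>j l. pderiv_x (\<lambda>y I. g j (freeze S x y) I) x I l) mu
    \<longleftrightarrow> eigenvalue_on S (\<lambda>j l. pderiv_x (g j) x I l) mu"
  unfolding eigenvalue_on_def by (simp add: pderiv_x_freeze cong: sum.cong)

lemma core_nodes_disjoint_d_nodes:
  "(Ins \<union> sigma_nodes E Ins out \<union> {out}) \<inter> d_nodes E Ins out = {}"
  by (auto simp: sigma_nodes_def d_nodes_def downstream_def)

theorem lemma3p1:
  fixes E :: "('n::finite \<times> 'n) set" and Ins :: "'n set" and out :: 'n
    and f :: "'n \<Rightarrow> real^'n \<Rightarrow> real \<Rightarrow> real" and X0 :: "real^'n" and I0 :: real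
  assumes net: "Ins \<noteq> {}" "out \<notin> Ins"
    and adm: "admissible E Ins f"
    and form_core: "\<And>j x x' I. j \<in> Ins \<union> sigma_nodes E Ins out \<union> {out} \<Longrightarrow>
        (\<forall>k\<in>Ins \<union> sigma_nodes E Ins out \<union> d_nodes E Ins out \<union> {out}. x $ k = x' $ k) \<Longrightarrow>
        f j x I = f j x' I"
    and form_d: "\<And>j x x' I. j \<in> d_nodes E Ins out \<Longrightarrow>
        (\<forall>k\<in>d_nodes E Ins out. x $ k = x' $ k) \<Longrightarrow> f j x I = f j x' I"
    and stable: "lin_stable_equilibrium UNIV f X0 I0"
  shows "lin_stable_equilibrium (Ins \<union> sigma_nodes E Ins out \<union> {out})
           (\<lambda>j y I. f j (freeze (Ins \<union> sigma_nodes E Ins out \<union> {out}) X0 y) I) X0 I0"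
proof -
  define C where "C = Ins \<union> sigma_nodes E Ins out \<union> {out}"
  define D where "D = d_nodes E Ins out"
  define M where "M = (\<lambda>j k. pderiv_x (f j) X0 I0 k)"
  have core_rows: "M j k = 0" if "j \<in> C" "k \<notin> C \<union> D" for j k
  proof -
    have "f j x I0 = f j x' I0" if "\<forall>k\<in>C \<union> D. x $ k = x' $ k" for x x'
      by (rule form_core) (use \<open>j \<in> C\<close> that in \<open>auto simp: C_def D_def\<close>)
    then show ?thesis
      unfolding M_def using \<open>k \<notin> C \<union> D\<close> by (rule pderiv_x_eq_0_if_independent)
  qed
  have d_rows: "M j k = 0" if "j \<in> D" "k \<notin> D" for j k
  proof -
    have "f j x I0 = f j x' I0" if "\<forall>k\<in>D. x $ k = x' $ k" for x x'
      by (rule form_d) (use \<open>j \<in> D\<close> that in \<open>auto simp: D_def\<close>)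
    then show ?thesis
      unfolding M_def using \<open>k \<notin> D\<close> by (rule pderiv_x_eq_0_if_independent)
  qed
  have "C \<inter> D = {}"
    unfolding C_def D_def by (rule core_nodes_disjoint_d_nodes)
  then have "Re mu < 0" if "eigenvalue_on C M mu" for mu
    using eigenvalue_on_UNIV_if_block_triangular[OF _ core_rows d_rows that] stable
    unfolding lin_stable_equilibrium_def M_def by blast
  then show ?thesis
    using stable unfolding lin_stable_equilibrium_def C_def[symmetric] M_def
    by (simp add: freeze_self eigenvalue_on_Jacobian_freeze)
qed

end
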